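(* Let $\#\mathcal A(k)$ denote the number of $\alpha$-trees of length $k$. Then $\#\mathcal A(0)=1$ and for every $k\ge1$ $$\#\mathcal A(k)=\#\mathcal A(k-1)\cdot\sum_{i=0}^{k-1}\#\mathcal A(i).$$ In particular $\#\mathcal A(1)=1$, $\#\mathcal A(2)=2$, $\#\mathcal A(3)=8$, $\#\mathcal A(4)=96$.
   Context: All trees are finite rooted plane trees: the children of each node are linearly ordered (from "lowest" to "highest"), and for two children $a,b$ of the same node, $b$ lies above $a$ if $b$ comes later in this order. The length of a tree is the maximal distance of a node from the root (a single node has length 0). For a node $a$ of $T$, $T(a)$ is the maximal subtree of $T$ with root $a$. An $\alpha$-tree is a rooted plane tree such that whenever two nodes $a,b$ have the same parent and $b$ lies above $a$, the subtree $T(b)$ has strictly smaller length than $T(a)$. Trees are counted up to isomorphism of rooted plane trees. *)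

theory Defs
  imports Main
begin

text \<open>Finite rooted plane trees up to isomorphism: a node with an ordered list of
children (from lowest to highest).\<close>
datatype ptree = Node "ptree list"

fun len :: "ptree \<Rightarrow> nat" where
  "len (Node ts) = (if ts = [] then 0 else Suc (Max (set (map len ts))))"

text \<open>alpha-tree: for siblings a, b with b above a (later in the list),
len T(b) < len T(a); this holds at every node.\<close>
fun alpha_tree :: "ptree \<Rightarrow> bool" where
  "alpha_tree (Node ts) =
     ((\<forall>i j. i < j \<and> j < length ts \<longrightarrow> len (ts ! j) < len (ts ! i))
      \<and> (\<forall>t\<in>set ts. alpha_tree t))"

definition numA :: "nat \<Rightarrow> nat" where
  "numA k = card {t. alpha_tree t \<and> len t = k}"

end

theory Submission
  imports Defs
begin

(* An alpha-tree of length k+1 has a nonempty list of children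
   t # rs.  Because the children lengths strictly decrease, the lowest child t
   carries the length: it is an alpha-tree of length k, and the tree Node rs
   obtained by removing it is again an alpha-tree, of length at most k.
   Conversely, attaching an alpha-tree t of length k as new lowest child to an
   alpha-tree of length at most k yields an alpha-tree of length k+1.  Hence
   "attach the lowest child" is a bijection
       (alpha-trees of length k) x (alpha-trees of length <= k)
         --> (alpha-trees of length k+1),
   and counting both sides (the second factor is a disjoint union over the
   lengths 0..k) gives the recursion. *)

definition alpha_trees :: "nat \<Rightarrow> ptree set" where
  "alpha_trees k = {t. alpha_tree t \<and> len t = k}"

lemma numA_eq_card: "numA k = card (alpha_trees k)"
  by (simp add: numA_def alpha_trees_def)

lemma len_Node: "len (Node rs) = (if rs = [] then 0 else Suc (Max (len ` set rs)))"
  by simp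

declare len.simps [simp del]

lemma len_Node_le_iff: "len (Node rs) \<le> n \<longleftrightarrow> (\<forall>r\<in>set rs. len r < n)"
proof (cases "rs = []")
  case False
  then have "Max (len ` set rs) < n \<longleftrightarrow> (\<forall>r\<in>set rs. len r < n)"
    by (subst Max_less_iff) auto
  with False show ?thesis by (simp add: len_Node Suc_le_eq)
qed (simp add: len_Node)

lemma alpha_tree_Node_iff:
  "alpha_tree (Node ts) \<longleftrightarrow>
     sorted_wrt (\<lambda>a b. len b < len a) ts \<and> (\<forall>t\<in>set ts. alpha_tree t)"
  by (simp add: sorted_wrt_iff_nth_less) meson

declare alpha_tree.simps [simp del]

lemma alpha_tree_Cons_iff:
  "alpha_tree (Node (t # rs)) \<longleftrightarrow>
     alpha_tree t \<and> alpha_tree (Node rs) \<and> len (Node rs) \<le> len t"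
  unfolding alpha_tree_Node_iff len_Node_le_iff by auto

lemma len_Cons:
  assumes "len (Node rs) \<le> len t"
  shows "len (Node (t # rs)) = Suc (len t)"
proof -
  have "\<forall>r\<in>set rs. len r < len t" using assms len_Node_le_iff by blast
  then have "Max (len ` set (t # rs)) = len t" by (intro Max_eqI) auto
  then show ?thesis by (simp add: len_Node)
qed

fun attach :: "ptree \<Rightarrow> ptree \<Rightarrow> ptree" where
  "attach t (Node rs) = Node (t # rs)"

lemma inj_attach: "inj (case_prod attach)"
proof (rule injI, clarify)
  fix t s t' s'
  assume "attach t s = attach t' s'"
  then show "t = t' \<and> s = s'" by (cases s; cases s') simp
qed

lemma alpha_trees_0: "alpha_trees 0 = {Node []}"
proof -
  have "alpha_tree (Node [])" by (simp add: alpha_tree_Node_iff)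
  moreover have "len t = 0 \<Longrightarrow> t = Node []" for t
    by (cases t) (simp add: len_Node split: if_splits)
  ultimately show ?thesis by (auto simp: alpha_trees_def len_Node)
qed

lemma alpha_trees_Suc:
  "alpha_trees (Suc k) = case_prod attach ` (alpha_trees k \<times> (\<Union>i\<le>k. alpha_trees i))"
proof (intro set_eqI iffI)
  fix x assume x: "x \<in> alpha_trees (Suc k)"
  obtain ts where x_def: "x = Node ts" by (cases x)
  with x obtain t rs where ts: "ts = t # rs"
    by (cases ts) (auto simp: alpha_trees_def len_Node)
  from x x_def ts have t: "alpha_tree t" and rs: "alpha_tree (Node rs)"
    and shorter: "len (Node rs) \<le> len t" and "len (Node (t # rs)) = Suc k"
    by (auto simp: alpha_trees_def alpha_tree_Cons_iff)
  then have "len t = k" using len_Cons[OF shorter] by simp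
  with t rs shorter have "(t, Node rs) \<in> alpha_trees k \<times> (\<Union>i\<le>k. alpha_trees i)"
    by (auto simp: alpha_trees_def)
  moreover have "x = attach t (Node rs)" using x_def ts by simp
  ultimately show "x \<in> case_prod attach ` (alpha_trees k \<times> (\<Union>i\<le>k. alpha_trees i))"
    by force
next
  fix x assume "x \<in> case_prod attach ` (alpha_trees k \<times> (\<Union>i\<le>k. alpha_trees i))"
  then obtain t s where "t \<in> alpha_trees k" "s \<in> (\<Union>i\<le>k. alpha_trees i)"
    and x_attach: "x = attach t s"
    by auto
  moreover obtain rs where s: "s = Node rs" by (cases s)
  ultimately have "t \<in> alpha_trees k" "Node rs \<in> (\<Union>i\<le>k. alpha_trees i)"
    and x: "x = Node (t # rs)"
    by simp_all
  then have "alpha_tree t" "alpha_tree (Node rs)" "len (Node rs) \<le> len t" "len t = k"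
    by (auto simp: alpha_trees_def)
  then show "x \<in> alpha_trees (Suc k)"
    using len_Cons x by (simp add: alpha_trees_def alpha_tree_Cons_iff)
qed

lemma finite_alpha_trees: "finite (alpha_trees k)"
proof (induction k rule: less_induct)
  case (less k)
  then show ?case
    by (cases k) (simp_all add: alpha_trees_0 alpha_trees_Suc)
qed

lemma numA_0: "numA 0 = 1"
  by (simp add: numA_eq_card alpha_trees_0)

lemma numA_Suc: "numA (Suc k) = numA k * (\<Sum>i\<le>k. numA i)"
proof -
  have "card (alpha_trees (Suc k)) = card (alpha_trees k \<times> (\<Union>i\<le>k. alpha_trees i))"
    unfolding alpha_trees_Suc by (rule card_image) (rule inj_on_subset[OF inj_attach], simp)
  also have "\<dots> = card (alpha_trees k) * card (\<Union>i\<le>k. alpha_trees i)"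
    by (rule card_cartesian_product)
  also have "card (\<Union>i\<le>k. alpha_trees i) = (\<Sum>i\<le>k. card (alpha_trees i))"
    by (rule card_UN_disjoint) (simp_all add: finite_alpha_trees, auto simp: alpha_trees_def)
  finally show ?thesis by (simp add: numA_eq_card)
qed

theorem mainTheorem5:
  shows "numA 0 = 1
    \<and> (\<forall>k\<ge>1. numA k = numA (k - 1) * (\<Sum>i = 0..k-1. numA i))
    \<and> numA 1 = 1 \<and> numA 2 = 2 \<and> numA 3 = 8 \<and> numA 4 = 96"
proof -
  have recursion: "numA k = numA (k - 1) * (\<Sum>i = 0..k-1. numA i)" if "k \<ge> 1" for k
  proof -
    obtain m where k: "k = Suc m" using \<open>k \<ge> 1\<close> by (cases k) auto
    have "{0..m} = {..m}" by auto
    then show ?thesis using numA_Suc[of m] k by simp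
  qed
  have n1: "numA 1 = 1" using numA_Suc[of 0] numA_0 by simp
  have n2: "numA 2 = 2" using numA_Suc[of 1] numA_0 n1 by (simp add: numeral_2_eq_2)
  have n3: "numA 3 = 8"
    using numA_Suc[of 2] numA_0 n1 n2 by (simp add: numeral_3_eq_3 numeral_2_eq_2)
  have n4: "numA 4 = 96"
    using numA_Suc[of 3] numA_0 n1 n2 n3 by (simp add: numeral_eq_Suc)
  show ?thesis using numA_0 recursion n1 n2 n3 n4 by blast
qed

end
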